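(* Let $A_1,\dots,A_m\in\mathbb{S}^n$, $b\in\mathbb{R}^m$, $C\in\mathbb{S}^n$, and let Assumption 1 hold for some $p$. If $Y\in\mathcal{M}_p$ has $\operatorname{rank}(Y)<p$ and $\operatorname{Hess}g(Y)\succeq-\varepsilon_H\operatorname{Id}$, then $S(Y)\succeq-\frac{\varepsilon_H}{2}I_n$.
   Context: $\mathbb{S}^n$: real symmetric $n\times n$ matrices; $\langle U,V\rangle=\operatorname{tr}(U^\top V)$, $\|\cdot\|$ Frobenius norm. $\mathcal{A}(X)_i=\langle A_i,X\rangle$, $\mathcal{A}^*(\nu)=\sum_i\nu_iA_i$. $\mathcal{M}_p=\{Y\in\mathbb{R}^{n\times p}:\mathcal{A}(YY^\top)=b\}$, $g(Y)=\langle CY,Y\rangle$. Assumption 1 (for $p$): either (a) $A_1Y,\dots,A_mY$ are linearly independent for all $Y\in\mathcal{M}_p$, or (b) $\operatorname{span}\{A_1Y,\dots,A_mY\}$ has constant dimension on an open neighborhood of $\mathcal{M}_p$. For $Y\in\mathcal{M}_p$: $T_Y=\{\dot Y:\langle A_iY,\dot Y\rangle=0\ \forall i\}$, $P_Y$ orthogonal projector onto $T_Y$; $G_{ij}=\langle A_iY,A_jY\rangle$, $\mu=G^\dagger\mathcal{A}(CYY^\top)$, $S(Y)=C-\mathcal{A}^*(\mu)$. The Riemannian Hessian is $\operatorname{Hess}g(Y)[\dot Y]=2P_Y(S(Y)\dot Y)$ for $\dot Y\in T_Y$; $\operatorname{Hess}g(Y)\succeq-\varepsilon_H\operatorname{Id}$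 means $\langle\dot Y,\operatorname{Hess}g(Y)[\dot Y]\rangle\ge-\varepsilon_H\|\dot Y\|^2$ for all $\dot Y\in T_Y$. *)

theory Defs
  imports "HOL-Analysis.Analysis"
begin

text \<open>Matrices are real^'c^'r (rows indexed by 'r, columns by 'c). n = CARD('n),
  p = CARD('p), m = CARD('m) (constraint index type).\<close>

definition symmetric_mat :: "real^'n^'n \<Rightarrow> bool" where
  "symmetric_mat M \<longleftrightarrow> transpose M = M"

definition frob :: "real^'c^'r \<Rightarrow> real^'c^'r \<Rightarrow> real" where
  "frob U V = trace (transpose U ** V)"

definition opA :: "('m \<Rightarrow> real^'n^'n) \<Rightarrow> real^'n^'n \<Rightarrow> real^'m" where
  "opA A X = (\<chi> i. frob (A i) X)"

definition opA_adj :: "('m::finite \<Rightarrow> real^'n^'n) \<Rightarrow> real^'m \<Rightarrow> real^'n^'n" where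
  "opA_adj A \<nu> = (\<Sum>i\<in>UNIV. (\<nu> $ i) *\<^sub>R A i)"

definition Mfeas :: "('m \<Rightarrow> real^'n^'n) \<Rightarrow> real^'m \<Rightarrow> (real^'p^'n) set" where
  "Mfeas A b = {Y. opA A (Y ** transpose Y) = b}"

definition gobj :: "real^'n^'n \<Rightarrow> real^'p^'n \<Rightarrow> real" where
  "gobj C Y = frob (C ** Y) Y"

text \<open>Assumption 1 for p (p given by the column type 'p).\<close>
definition assumption1 :: "('m::finite \<Rightarrow> real^'n^'n) \<Rightarrow> real^'m \<Rightarrow> ('p::finite) itself \<Rightarrow> bool" where
  "assumption1 A b _ \<longleftrightarrow>
     (\<forall>Y::real^'p^'n \<in> Mfeas A b. \<forall>c::'m \<Rightarrow> real.
         (\<Sum>i\<in>UNIV. c i *\<^sub>R (A i ** Y)) = 0 \<longrightarrow> (\<forall>i. c i = 0))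
   \<or> (\<exists>U::(real^'p^'n) set. open U \<and> (Mfeas A b :: (real^'p^'n) set) \<subseteq> U \<and>
        (\<exists>d. \<forall>Y\<in>U. dim (span (range (\<lambda>i. A i ** Y))) = d))"

definition tangent :: "('m \<Rightarrow> real^'n^'n) \<Rightarrow> real^'p^'n \<Rightarrow> (real^'p^'n) set" where
  "tangent A Y = {Yd. \<forall>i. frob (A i ** Y) Yd = 0}"

definition projT :: "('m \<Rightarrow> real^'n^'n) \<Rightarrow> real^'p^'n \<Rightarrow> real^'p^'n \<Rightarrow> real^'p^'n" where
  "projT A Y Z = (THE W. W \<in> tangent A Y \<and> (\<forall>V\<in>tangent A Y. frob (Z - W) V = 0))"

definition gram :: "('m \<Rightarrow> real^'n^'n) \<Rightarrow> real^'p^'n \<Rightarrow> real^'m^'m" where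
  "gram A Y = (\<chi> i j. frob (A i ** Y) (A j ** Y))"

definition pinv :: "real^'m^'m \<Rightarrow> real^'m^'m" where
  "pinv G = (THE X. G ** X ** G = G \<and> X ** G ** X = X \<and>
                     transpose (G ** X) = G ** X \<and> transpose (X ** G) = X ** G)"

definition mult_mu :: "('m::finite \<Rightarrow> real^'n^'n) \<Rightarrow> real^'n^'n \<Rightarrow> real^'p^'n \<Rightarrow> real^'m" where
  "mult_mu A C Y = pinv (gram A Y) *v opA A (C ** Y ** transpose Y)"

definition Smat :: "('m::finite \<Rightarrow> real^'n^'n) \<Rightarrow> real^'n^'n \<Rightarrow> real^'p^'n \<Rightarrow> real^'n^'n" where
  "Smat A C Y = C - opA_adj A (mult_mu A C Y)"

definition hess :: "('m::finite \<Rightarrow> real^'n^'n) \<Rightarrow> real^'n^'n \<Rightarrow> real^'p^'n \<Rightarrow> real^'p^'n \<Rightarrow> real^'p^'n" where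
  "hess A C Y Yd = 2 *\<^sub>R projT A Y (Smat A C Y ** Yd)"

definition hess_lbound :: "('m::finite \<Rightarrow> real^'n^'n) \<Rightarrow> real^'n^'n \<Rightarrow> real^'p^'n \<Rightarrow> real \<Rightarrow> bool" where
  "hess_lbound A C Y eps \<longleftrightarrow>
     (\<forall>Yd\<in>tangent A Y. frob Yd (hess A C Y Yd) \<ge> - eps * frob Yd Yd)"

definition psd :: "real^'n^'n \<Rightarrow> bool" where
  "psd M \<longleftrightarrow> (\<forall>x. x \<bullet> (M *v x) \<ge> 0)"

end

theory Submission
  imports Defs
begin

text \<open>Since rank Y < p there is z \<noteq> 0 with Y z = 0. For every x the rank-one direction
  x z^T is then tangent, because \<langle>A_i Y, x z^T\<rangle> = x^T A_i Y z = 0, and the projector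
  P_Y does not change its pairing with x z^T. Hence the Hessian form at x z^T equals
  2 (x^T S x) |z|^2, while |x z^T|^2 = |x|^2 |z|^2; dividing the Hessian bound by |z|^2
  gives x^T S x \<ge> -(\<epsilon>_H/2) |x|^2.\<close>

lemma frob_eq_inner: "frob (U::real^'c^'r) V = U \<bullet> V"
  unfolding frob_def trace_def transpose_def matrix_matrix_mult_def inner_vec_def
  by simp (rule sum.swap)

definition outer :: "real^'r \<Rightarrow> real^'c \<Rightarrow> real^'c^'r" where
  "outer x z = (\<chi> i j. x$i * z$j)"

lemma inner_outer_outer: "outer x z \<bullet> outer y w = (x \<bullet> y) * (z \<bullet> w)"
  unfolding outer_def inner_vec_def
  by (simp add: sum_product algebra_simps) (rule sum.swap)

lemma matrix_mult_outer: "(M::real^'r^'k) ** outer x z = outer (M *v x) z"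
  unfolding outer_def matrix_matrix_mult_def matrix_vector_mult_def
  by (simp add: vec_eq_iff sum_distrib_left algebra_simps)

lemma inner_outer_right: "(B::real^'c^'r) \<bullet> outer x z = x \<bullet> (B *v z)"
  unfolding outer_def inner_vec_def matrix_vector_mult_def
  by (simp add: sum_distrib_left algebra_simps)

lemma inner_outer_matrix_mult: "outer x z \<bullet> ((M::real^'r^'r) ** outer x z) = (x \<bullet> (M *v x)) * (z \<bullet> z)"
  by (simp add: matrix_mult_outer inner_outer_outer)

lemma subspace_tangent: "subspace (tangent A Y)"
  unfolding subspace_def tangent_def frob_eq_inner
  by (simp add: inner_add_right)

lemma outer_kernel_in_tangent:
  assumes "Y *v z = 0"
  shows "outer x z \<in> tangent A Y"
  unfolding tangent_def frob_eq_inner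
  by (simp add: inner_outer_right assms matrix_vector_mul_assoc[symmetric])

lemma projT_in_tangent_and_orthogonal:
  "projT A Y Z \<in> tangent A Y \<and> (\<forall>V\<in>tangent A Y. frob (Z - projT A Y Z) V = 0)"
proof -
  have span_T: "span (tangent A Y) = tangent A Y"
    using subspace_tangent by (simp add: span_eq_iff)
  obtain y w where y: "y \<in> span (tangent A Y)"
    and w: "\<And>v. v \<in> span (tangent A Y) \<Longrightarrow> orthogonal w v" and Z: "Z = y + w"
    using orthogonal_subspace_decomp_exists by blast
  have y_proj: "y \<in> tangent A Y \<and> (\<forall>V\<in>tangent A Y. frob (Z - y) V = 0)"
    using y w Z span_T by (auto simp: frob_eq_inner orthogonal_def)
  have unique: "W = y" if W: "W \<in> tangent A Y \<and> (\<forall>V\<in>tangent A Y. frob (Z - W) V = 0)" for W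
  proof -
    have "W - y \<in> tangent A Y"
      using W y_proj subspace_tangent subspace_diff by blast
    then have "frob (Z - W) (W - y) = 0" "frob (Z - y) (W - y) = 0"
      using W y_proj by auto
    then have "(W - y) \<bullet> (W - y) = 0"
      unfolding frob_eq_inner by (simp add: inner_diff_left)
    then show ?thesis by simp
  qed
  have "projT A Y Z = y"
    unfolding projT_def by (rule the_equality) (use y_proj unique in blast)+
  then show ?thesis using y_proj by simp
qed

lemma frob_projT_tangent:
  assumes "W \<in> tangent A Y"
  shows "frob W (projT A Y Z) = frob W Z"
proof -
  have "frob (Z - projT A Y Z) W = 0"
    using projT_in_tangent_and_orthogonal assms by blast
  then show ?thesis
    unfolding frob_eq_inner by (simp add: inner_commute inner_diff_right)
qed

lemma hess_form_outer_kernel: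
  assumes "Y *v z = 0"
  shows "frob (outer x z) (hess A C Y (outer x z)) = 2 * (x \<bullet> (Smat A C Y *v x)) * (z \<bullet> z)"
proof -
  have "frob (outer x z) (projT A Y (Smat A C Y ** outer x z))
      = frob (outer x z) (Smat A C Y ** outer x z)"
    using frob_projT_tangent outer_kernel_in_tangent[OF assms] by blast
  then show ?thesis
    by (simp add: hess_def frob_eq_inner inner_outer_matrix_mult)
qed

lemma rank_less_imp_nontrivial_kernel:
  fixes Y :: "real^'p^'n"
  assumes "rank Y < CARD('p)"
  obtains z where "z \<noteq> 0" "Y *v z = 0"
proof -
  have "\<not> inj ((*v) Y)"
    using assms full_rank_injective by (metis less_irrefl)
  then obtain u v where "Y *v u = Y *v v" "u \<noteq> v"
    unfolding inj_def by blast
  then show ?thesis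
    using that by (metis eq_iff_diff_eq_0 matrix_vector_mult_diff_distrib)
qed

lemma psd_add_scaled_identity_iff:
  "psd (S + c *\<^sub>R mat 1) \<longleftrightarrow> (\<forall>x. x \<bullet> (S *v x) + c * (x \<bullet> x) \<ge> 0)"
  by (simp add: psd_def matrix_vector_mult_add_rdistrib inner_add_right
      scaleR_matrix_vector_assoc[symmetric])

theorem lemma5:
  fixes A :: "'m::finite \<Rightarrow> real^'n^'n" and b :: "real^'m" and C :: "real^'n^'n"
    and Y :: "real^'p^'n" and epsH :: real
  assumes "\<forall>i. symmetric_mat (A i)"
    and "symmetric_mat C"
    and "assumption1 A b TYPE('p)"
    and "Y \<in> Mfeas A b"
    and "rank Y < CARD('p)"
    and "hess_lbound A C Y epsH"
  shows "psd (Smat A C Y + (epsH / 2) *\<^sub>R mat 1)"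
proof -
  obtain z where "z \<noteq> 0" and kernel: "Y *v z = 0"
    using rank_less_imp_nontrivial_kernel assms(5) by blast
  then have z_pos: "z \<bullet> z > 0" by simp
  show ?thesis unfolding psd_add_scaled_identity_iff
  proof
    fix x
    have "frob (outer x z) (hess A C Y (outer x z)) \<ge> - epsH * frob (outer x z) (outer x z)"
      using assms(6) outer_kernel_in_tangent[OF kernel] unfolding hess_lbound_def by blast
    then have "2 * (x \<bullet> (Smat A C Y *v x)) * (z \<bullet> z) \<ge> - epsH * ((x \<bullet> x) * (z \<bullet> z))"
      unfolding hess_form_outer_kernel[OF kernel] by (simp add: frob_eq_inner inner_outer_outer)
    then have "(2 * (x \<bullet> (Smat A C Y *v x)) + epsH * (x \<bullet> x)) * (z \<bullet> z) \<ge> 0"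
      by (simp add: algebra_simps)
    then show "x \<bullet> (Smat A C Y *v x) + epsH / 2 * (x \<bullet> x) \<ge> 0"
      using z_pos by (simp add: zero_le_mult_iff)
  qed
qed

end
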